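(* Let $X$ be the set of continuous functions $f:[1,\infty)\to\mathbb{R}$ such that $f(x)\ge x$ for all $1\le x<2$, and $(y+1)f(y)+f(x)\ge (y+1)x$ for all $x\ge 2$ and all $1\le y\le x$. For a real number $c$, let $f_c(x)=x^c$ on $[1,\infty)$. Then $f_c\in X$ if and only if $c\ge \frac{1+\sqrt5}{2}$. In particular, $X$ is nonempty. *)

theory Defs
  imports "HOL-Analysis.Analysis"
begin

text \<open>Functions on [1,\<infinity>) are represented as total functions real \<Rightarrow> real;
  only their values on {1..} matter.\<close>
definition X :: "(real \<Rightarrow> real) set" where
  "X = {f. continuous_on {1..} f
         \<and> (\<forall>x. 1 \<le> x \<and> x < 2 \<longrightarrow> f x \<ge> x)
         \<and> (\<forall>x y. x \<ge> 2 \<and> 1 \<le> y \<and> y \<le> x \<longrightarrow> (y + 1) * f y + f x \<ge> (y + 1) * x)}"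

definition fc :: "real \<Rightarrow> real \<Rightarrow> real" where
  "fc c = (\<lambda>x. x powr c)"

end

theory Submission
  imports Defs
begin

text \<open>Let \<open>\<phi>\<close> be the golden ratio, so \<open>\<phi>\<^sup>2 = \<phi> + 1\<close>. Since \<open>X\<close> is closed under
  increasing a function and \<open>x powr c\<close> increases with \<open>c\<close> on \<open>[1,\<infinity>)\<close>, it suffices to show
  \<open>fc \<phi> \<in> X\<close>. When \<open>x > y powr \<phi>\<close>, the defining inequality reduces (via \<open>y + 1 \<le> 2 y\<close>) to
  \<open>2 y x \<le> x powr \<phi> + 2 y powr (\<phi> + 1)\<close>. The substitution \<open>x = u powr \<phi>\<close>, \<open>y = t u\<close> makes
  all three terms homogeneous of degree \<open>\<phi> + 1\<close> in \<open>u\<close>, precisely because \<open>\<phi>\<^sup>2 = \<phi> + 1\<close>,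
  leaving \<open>2 t \<le> 1 + 2 t powr (\<phi> + 1)\<close>, which holds because \<open>\<phi> + 1 \<le> 3\<close> and
  \<open>1 - 2 t + 2 t\<^sup>3 \<ge> 0\<close> on \<open>[0,1]\<close>.

  Conversely, for \<open>1 \<le> c < \<phi>\<close> the number \<open>e = c + 1 - c\<^sup>2\<close> is positive, and
  \<open>y = 4 powr (1/e)\<close>, \<open>x = 2 y powr c\<close> violate the inequality, since
  \<open>x powr c = 2 powr c * y powr c\<^sup>2 < 4 y powr c\<^sup>2 = y powr (c + 1)\<close>.
  For \<open>c < 1\<close> already \<open>fc c (3/2) < 3/2\<close>.\<close>

definition golden_ratio :: real where
  "golden_ratio = (1 + sqrt 5) / 2"

lemma golden_ratio_square: "golden_ratio * golden_ratio = golden_ratio + 1"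
  by (simp add: golden_ratio_def field_simps)

lemma golden_ratio_gt_one: "1 < golden_ratio"
proof -
  have "2 < sqrt 5" by (simp add: real_less_rsqrt)
  then show ?thesis by (simp add: golden_ratio_def)
qed

lemma golden_ratio_le_two: "golden_ratio \<le> 2"
proof -
  have "sqrt 5 \<le> 3" by (simp add: real_sqrt_le_iff[of 5 9, simplified])
  then show ?thesis by (simp add: golden_ratio_def)
qed

lemma square_less_succ_if_less_golden_ratio:
  fixes c :: real
  assumes "0 \<le> c" "c < golden_ratio"
  shows "c * c < c + 1"
proof -
  have "2 * c - 1 < sqrt 5" using assms(2) by (simp add: golden_ratio_def)
  moreover have "1 < sqrt (5 :: real)" by simp
  then have "- sqrt 5 < 2 * c - 1" using assms(1) by linarith
  ultimately have "0 < (sqrt 5 - (2 * c - 1)) * (sqrt 5 + (2 * c - 1))"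
    by (intro mult_pos_pos) auto
  then show ?thesis by (simp add: algebra_simps)
qed

lemma two_mult_le_one_plus_two_powr:
  fixes t p :: real
  assumes "0 \<le> t" "1 \<le> p" "p \<le> 3"
  shows "2 * t \<le> 1 + 2 * t powr p"
proof (cases "t \<le> 1")
  case True
  have "0 \<le> 2 * (t - 1/2)\<^sup>2 * (t + 1) + (1 - t) / 2" using assms True by simp
  also have "\<dots> = 1 - 2 * t + 2 * t ^ 3"
    by (simp add: field_simps power2_eq_square power3_eq_cube)
  finally have cubic_nonneg: "0 \<le> 1 - 2 * t + 2 * t ^ 3" .
  have "t ^ 3 \<le> t powr p"
  proof (cases "t = 0")
    case False
    then have "t powr 3 \<le> t powr p" using assms True by (intro powr_mono') auto
    then show ?thesis using False assms by (simp add: powr_numeral)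
  qed (use assms in simp)
  with cubic_nonneg show ?thesis by linarith
next
  case False
  then have "t powr 1 \<le> t powr p" using assms by (intro powr_mono) auto
  then show ?thesis using False by simp
qed

lemma two_mult_le_powr_golden_ratio:
  fixes x y :: real
  assumes "0 < x" "0 \<le> y"
  shows "2 * y * x \<le> x powr golden_ratio + 2 * y powr (golden_ratio + 1)"
proof -
  let ?\<phi> = golden_ratio
  have \<phi>_pos: "0 < ?\<phi>" using golden_ratio_gt_one by simp
  define u where "u = x powr (1 / ?\<phi>)"
  define t where "t = y / u"
  have u_pos: "0 < u" using assms(1) by (simp add: u_def)
  have t_nonneg: "0 \<le> t" using assms(2) u_pos by (simp add: t_def)
  have y_eq: "y = t * u" using u_pos by (simp add: t_def)
  have x_eq: "x = u powr ?\<phi>" using assms(1) \<phi>_pos by (simp add: u_def powr_powr)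
  have "(?\<phi> + 1) / ?\<phi> = ?\<phi>" using \<phi>_pos by (simp add: field_simps golden_ratio_square)
  then have u_powr: "u powr (?\<phi> + 1) = x powr ?\<phi>"
    using assms(1) by (simp add: u_def powr_powr)
  have "2 * y * x = 2 * t * (u powr 1 * u powr ?\<phi>)"
    using u_pos by (simp add: y_eq x_eq)
  also have "\<dots> = 2 * t * x powr ?\<phi>"
    by (simp only: u_powr add.commute[of 1] flip: powr_add)
  also have "\<dots> \<le> (1 + 2 * t powr (?\<phi> + 1)) * x powr ?\<phi>"
    using two_mult_le_one_plus_two_powr[OF t_nonneg] golden_ratio_gt_one golden_ratio_le_two
    by (intro mult_right_mono) auto
  also have "\<dots> = x powr ?\<phi> + 2 * (t powr (?\<phi> + 1) * u powr (?\<phi> + 1))"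
    unfolding u_powr by (simp add: algebra_simps)
  also have "t powr (?\<phi> + 1) * u powr (?\<phi> + 1) = y powr (?\<phi> + 1)"
    unfolding y_eq using u_pos t_nonneg by (simp add: powr_mult)
  finally show ?thesis .
qed

lemma X_inequality_powr_golden_ratio:
  fixes x y :: real
  assumes "0 < x" "1 \<le> y"
  shows "(y + 1) * x \<le> (y + 1) * y powr golden_ratio + x powr golden_ratio"
proof (cases "x \<le> y powr golden_ratio")
  case True
  then show ?thesis using assms by (simp add: add_increasing2 mult_left_mono)
next
  case False
  have "(y + 1) * (x - y powr golden_ratio) \<le> 2 * y * (x - y powr golden_ratio)"
    using False assms(2) by (intro mult_right_mono) auto
  also have "\<dots> = 2 * y * x - 2 * y powr (golden_ratio + 1)"
    using assms(2) by (simp add: powr_add algebra_simps)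
  also have "\<dots> \<le> x powr golden_ratio"
    using two_mult_le_powr_golden_ratio[of x y] assms by simp
  finally show ?thesis by (simp add: algebra_simps)
qed

lemma X_lower_bound: "f \<in> X \<Longrightarrow> 1 \<le> x \<Longrightarrow> x < 2 \<Longrightarrow> x \<le> f x"
  by (simp add: X_def)

lemma X_inequality:
  "f \<in> X \<Longrightarrow> 2 \<le> x \<Longrightarrow> 1 \<le> y \<Longrightarrow> y \<le> x \<Longrightarrow> (y + 1) * x \<le> (y + 1) * f y + f x"
  by (simp add: X_def)

lemma X_upward_closed:
  assumes "f \<in> X" "continuous_on {1..} g" "\<And>x. 1 \<le> x \<Longrightarrow> f x \<le> g x"
  shows "g \<in> X"
proof -
  have "(y + 1) * x \<le> (y + 1) * g y + g x" if "2 \<le> x" "1 \<le> y" "y \<le> x" for x y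
  proof -
    have "(y + 1) * x \<le> (y + 1) * f y + f x" using X_inequality[OF assms(1) that] .
    also have "\<dots> \<le> (y + 1) * g y + g x"
      using assms(3) that by (intro add_mono mult_left_mono) auto
    finally show ?thesis .
  qed
  moreover have "x \<le> g x" if "1 \<le> x" "x < 2" for x
    using X_lower_bound[OF assms(1) that] assms(3) that by fastforce
  ultimately show ?thesis using assms(2) by (auto simp: X_def)
qed

lemma continuous_on_fc: "continuous_on {1..} (fc c)"
  unfolding fc_def by (intro continuous_on_powr continuous_intros) auto

lemma fc_golden_ratio_in_X: "fc golden_ratio \<in> X"
proof -
  have "x \<le> x powr golden_ratio" if "1 \<le> x" for x :: real
    using powr_mono[where a = 1 and b = golden_ratio and x = x] that golden_ratio_gt_one by simp
  then show ?thesis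
    using X_inequality_powr_golden_ratio continuous_on_fc by (auto simp: X_def fc_def)
qed

lemma fc_in_X_if_ge_golden_ratio:
  assumes "golden_ratio \<le> c"
  shows "fc c \<in> X"
  using fc_golden_ratio_in_X continuous_on_fc
  by (rule X_upward_closed) (use assms in \<open>simp add: fc_def powr_mono\<close>)

lemma fc_notin_X_if_less_one:
  assumes "c < 1"
  shows "fc c \<notin> X"
proof
  assume "fc c \<in> X"
  then have "3/2 \<le> fc c (3/2)" by (rule X_lower_bound) auto
  moreover have "(3/2 :: real) powr c < (3/2) powr 1" using assms by (intro powr_less_mono) auto
  ultimately show False by (simp add: fc_def)
qed

lemma fc_notin_X_if_square_less_succ:
  assumes "1 \<le> c" "c * c < c + 1"
  shows "fc c \<notin> X"
proof
  assume "fc c \<in> X"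
  define e where "e = c + 1 - c * c"
  define y where "y = (4 :: real) powr (1 / e)"
  define x where "x = 2 * y powr c"
  have e_pos: "0 < e" using assms(2) by (simp add: e_def)
  have y_ge_1: "1 \<le> y" using e_pos by (simp add: y_def ge_one_powr_ge_zero)
  have "y \<le> y powr c" using powr_mono[where a = 1 and b = c and x = y] assms(1) y_ge_1 by simp
  then have "2 \<le> x" "y \<le> x" using y_ge_1 by (simp_all add: x_def)
  then have violated: "(y + 1) * x \<le> (y + 1) * y powr c + x powr c"
    using X_inequality[OF \<open>fc c \<in> X\<close>] y_ge_1 by (simp add: fc_def)
  have "c < 2"
  proof (rule ccontr)
    assume "\<not> c < 2"
    then have "2 * c \<le> c * c" by (intro mult_right_mono) auto
    then show False using assms by linarith
  qed
  then have "(2 :: real) powr c < 2 powr 2" by (intro powr_less_mono) auto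
  then have "x powr c < 4 * y powr (c * c)"
    using y_ge_1 by (simp add: x_def powr_mult powr_powr)
  also have "4 * y powr (c * c) = y powr e * y powr (c * c)"
    using e_pos by (simp add: y_def powr_powr)
  also have "\<dots> = y powr (c + 1)" by (simp add: e_def flip: powr_add)
  also have "\<dots> = y * y powr c" using y_ge_1 by (simp add: powr_add)
  finally show False using violated powr_ge_zero[of y c] by (simp add: x_def algebra_simps)
qed

lemma fc_in_X_iff: "fc c \<in> X \<longleftrightarrow> golden_ratio \<le> c"
proof
  assume "fc c \<in> X"
  then have "1 \<le> c" using fc_notin_X_if_less_one not_le by blast
  show "golden_ratio \<le> c"
  proof (rule ccontr)
    assume "\<not> golden_ratio \<le> c"
    then have "c * c < c + 1" using \<open>1 \<le> c\<close> by (intro square_less_succ_if_less_golden_ratio) auto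
    with \<open>1 \<le> c\<close> \<open>fc c \<in> X\<close> show False using fc_notin_X_if_square_less_succ by blast
  qed
qed (rule fc_in_X_if_ge_golden_ratio)

theorem mainTheorem1:
  shows "(\<forall>c::real. fc c \<in> X \<longleftrightarrow> c \<ge> (1 + sqrt 5) / 2) \<and> X \<noteq> {}"
proof
  show "\<forall>c. fc c \<in> X \<longleftrightarrow> c \<ge> (1 + sqrt 5) / 2"
    using fc_in_X_iff by (simp add: golden_ratio_def)
  show "X \<noteq> {}" using fc_golden_ratio_in_X by blast
qed

end
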